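(* Let $(X,\mathrm{d})$ be a compact metric space, let $k\geq 1$ and let $\mathscr{F}=\{f_1,\dots,f_k\}$ be a finite family of homeomorphisms of $X$. Consider the symbolic one-step skew-product $\Phi=\tau\ltimes\mathscr{F}$ on $\Sigma_k\times X$. Suppose that $X$ is a strict attractor of $\mathscr{F}$. Then the strong unstable foliation $\mathcal{F}^{uu}(\Phi)$ is minimal, i.e. every leaf $W^{uu}(\omega,x)$, $(\omega,x)\in\Sigma_k\times X$, is dense in $\Sigma_k\times X$.
   Context: $\Sigma_k=\{1,\dots,k\}^{\mathbb{Z}}$ with the metric $\mathrm{d}_{\Sigma_k}(\omega,\omega')=\nu^m$, $m=\min\{i\geq 0:\omega_i\neq\omega'_i\text{ or }\omega_{-i}\neq\omega'_{-i}\}$, for a fixed $0<\nu<1$; $\tau$ is the shift $(\tau\omega)_i=\omega_{i+1}$. The skew-product is $\Phi(\omega,x)=(\tau(\omega),f_{\omega_0}(x))$. The local stable (resp. unstable) set $W^s_{loc}(\omega)$ (resp. $W^u_{loc}(\omega)$) is the set of $\omega'\in\Sigma_k$ with $\omega'_i=\omega_i$ for all $i\geq0$ (resp. for all $i<0$). Set $W^{ss}_{loc}(\omega,x)=W^s_{loc}(\omega)\times\{x\}$, $W^{uu}_{loc}(\omega,x)=W^u_{loc}(\omega)\times\{x\}$, $W^{ss}(\omega,x)=\bigcup_{n\geq0}\Phi^{-n}(W^{ss}_{loc}(\Phi^n(\omega,x)))$, $W^{uu}(\omega,x)=\bigcup_{n\geq0}\Phi^{n}(W^{uu}_{loc}(\Phi^{-n}(\omega,x)))$.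 $\mathcal{F}^{uu}(\Phi)=\{W^{uu}(\omega,x)\}$, $\mathcal{F}^{ss}(\Phi)=\{W^{ss}(\omega,x)\}$; a foliation is minimal if each leaf is dense. The Hutchinson operator of $\mathscr{F}$ is $F(A)=f_1(A)\cup\dots\cup f_k(A)$ on the hyperspace $\mathscr{K}(X)$ of nonempty compact subsets of $X$ with the Hausdorff metric $\mathrm{d_H}$. A set $K\in\mathscr{K}(X)$ is a strict attractor of $\mathscr{F}$ if there is an open $U\supset K$ such that $F^n(S)\to K$ in $\mathrm{d_H}$ for every nonempty compact $S\subset U$; for $K=X$ this means $F^n(S)\to X$ for every $S\in\mathscr{K}(X)$. *)

theory Defs
  imports "HOL-Analysis.Analysis"
begin

definition hausdist :: "'a::metric_space set \<Rightarrow> 'a set \<Rightarrow> real" where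
  "hausdist A B = max (SUP a\<in>A. infdist a B) (SUP b\<in>B. infdist b A)"

definition hutchinson :: "nat \<Rightarrow> (nat \<Rightarrow> 'a \<Rightarrow> 'a) \<Rightarrow> 'a set \<Rightarrow> 'a set" where
  "hutchinson k f A = (\<Union>i\<in>{1..k}. f i ` A)"

definition strict_attractor :: "'a::metric_space set \<Rightarrow> nat \<Rightarrow> (nat \<Rightarrow> 'a \<Rightarrow> 'a) \<Rightarrow> 'a set \<Rightarrow> bool" where
  "strict_attractor X k f K \<longleftrightarrow>
     K \<noteq> {} \<and> compact K \<and> K \<subseteq> X \<and>
     (\<exists>U. openin (top_of_set X) U \<and> K \<subseteq> U \<and>
        (\<forall>S. S \<noteq> {} \<and> compact S \<and> S \<subseteq> U \<longrightarrow>
             (\<lambda>n. hausdist ((hutchinson k f ^^ n) S) K) \<longlonglongrightarrow> 0))"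

definition Sigma_k :: "nat \<Rightarrow> (int \<Rightarrow> nat) set" where
  "Sigma_k k = {\<omega>. \<forall>i. \<omega> i \<in> {1..k}}"

definition dSigma :: "real \<Rightarrow> (int \<Rightarrow> nat) \<Rightarrow> (int \<Rightarrow> nat) \<Rightarrow> real" where
  "dSigma \<nu> \<omega> \<omega>' = (if \<omega> = \<omega>' then 0
      else \<nu> ^ (LEAST m::nat. \<omega> (int m) \<noteq> \<omega>' (int m) \<or> \<omega> (- int m) \<noteq> \<omega>' (- int m)))"

definition shift :: "(int \<Rightarrow> nat) \<Rightarrow> (int \<Rightarrow> nat)" where
  "shift \<omega> = (\<lambda>i. \<omega> (i + 1))"

definition skew :: "(nat \<Rightarrow> 'a \<Rightarrow> 'a) \<Rightarrow> (int \<Rightarrow> nat) \<times> 'a \<Rightarrow> (int \<Rightarrow> nat) \<times> 'a" where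
  "skew f p = (shift (fst p), f (fst p 0) (snd p))"

definition Wuu_loc :: "nat \<Rightarrow> (int \<Rightarrow> nat) \<times> 'a \<Rightarrow> ((int \<Rightarrow> nat) \<times> 'a) set" where
  "Wuu_loc k p = {\<omega>' \<in> Sigma_k k. \<forall>i<0. \<omega>' i = fst p i} \<times> {snd p}"

text \<open>Strong unstable leaf W^uu(p) = \<Union>_{n\<ge>0} \<Phi>^n(W^uu_loc(\<Phi>^{-n}(p))).
  Since \<Phi> is a bijection of Sigma_k \<times> X, \<Phi>^{-n}(p) is the unique z in Sigma_k \<times> X
  with \<Phi>^n(z) = p.\<close>
definition Wuu :: "nat \<Rightarrow> 'a set \<Rightarrow> (nat \<Rightarrow> 'a \<Rightarrow> 'a) \<Rightarrow> (int \<Rightarrow> nat) \<times> 'a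
                    \<Rightarrow> ((int \<Rightarrow> nat) \<times> 'a) set" where
  "Wuu k X f p = (\<Union>n. \<Union>z\<in>{z \<in> Sigma_k k \<times> X. (skew f ^^ n) z = p}.
                    (skew f ^^ n) ` Wuu_loc k z)"

definition dense_in_SX :: "real \<Rightarrow> nat \<Rightarrow> 'a::metric_space set \<Rightarrow> ((int \<Rightarrow> nat) \<times> 'a) set \<Rightarrow> bool" where
  "dense_in_SX \<nu> k X W \<longleftrightarrow>
     (\<forall>\<omega>\<in>Sigma_k k. \<forall>x\<in>X. \<forall>\<epsilon>>0. \<exists>(\<eta>, y)\<in>W. dSigma \<nu> \<eta> \<omega> < \<epsilon> \<and> dist y x < \<epsilon>)"

end

theory Submission
  imports Defs
begin

text \<open>A point of the leaf \<open>W\<^sup>u\<^sup>u(\<omega>, x)\<close> is obtained by going back \<open>n\<close> steps along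
  \<open>\<omega>\<close> to some \<open>x\<^sub>0\<close>, replacing the past \<open>\<omega>\<^sub>-\<^sub>n, \<dots>, \<omega>\<^sub>-\<^sub>1\<close> by an arbitrary word and
  applying it to \<open>x\<^sub>0\<close>. To approach \<open>(\<omega>', y)\<close> the word must end with the \<open>m\<close> letters
  \<open>\<omega>'\<^sub>-\<^sub>m, \<dots>, \<omega>'\<^sub>-\<^sub>1\<close>; these map a neighbourhood of some preimage \<open>b\<close> of \<open>y\<close> (the
  maps are onto) close to \<open>y\<close>, so the first \<open>N = n - m\<close> letters must bring \<open>x\<^sub>0\<close> close to \<open>b\<close>. Since \<open>x\<^sub>0\<close>
  depends on \<open>n\<close>, this needs one length \<open>N\<close> that works from every starting point. The
  attractor property gives, for each point, all sufficiently long lengths; a Baire category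
  argument makes the threshold uniform on a ball, and since every point can be steered into
  that ball, compactness yields a common \<open>N\<close>.\<close>

definition words :: "nat \<Rightarrow> nat \<Rightarrow> nat list set" where
  "words k n = {w \<in> lists {1..k}. length w = n}"

lemma finite_words: "finite (words k n)"
  using finite_lists_length_eq[of "{1..k}" n] by (simp add: words_def lists_eq_set)

lemma replicate_in_words: "k \<ge> 1 \<Longrightarrow> replicate n 1 \<in> words k n"
  by (auto simp: words_def)

lemma words_Suc: "words k (Suc n) = (\<lambda>(w, i). w @ [i]) ` (words k n \<times> {1..k})"
proof
  show "words k (Suc n) \<subseteq> (\<lambda>(w, i). w @ [i]) ` (words k n \<times> {1..k})"
  proof
    fix w assume w: "w \<in> words k (Suc n)"
    then have ne: "w \<noteq> []" by (auto simp: words_def)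
    then have "w = butlast w @ [last w]" by simp
    moreover have "(butlast w, last w) \<in> words k n \<times> {1..k}"
      using w last_in_set[OF ne] by (auto simp: words_def in_set_butlastD)
    ultimately show "w \<in> (\<lambda>(w, i). w @ [i]) ` (words k n \<times> {1..k})" by force
  qed
qed (auto simp: words_def)

lemma hutchinson_funpow: "(hutchinson k f ^^ n) S = (\<Union>w\<in>words k n. fold f w ` S)"
proof (induction n)
  case 0
  show ?case by (simp add: words_def)
next
  case (Suc n)
  have "(hutchinson k f ^^ Suc n) S = (\<Union>i\<in>{1..k}. \<Union>w\<in>words k n. f i ` fold f w ` S)"
    by (simp only: funpow.simps comp_apply Suc.IH) (simp add: hutchinson_def image_UN)
  also have "\<dots> = (\<Union>w\<in>words k (Suc n). fold f w ` S)"
    by (auto simp: words_Suc image_image intro!: bexI)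
  finally show ?case .
qed

lemma fold_image_subset:
  assumes "\<And>i. i \<in> set w \<Longrightarrow> f i ` X \<subseteq> X"
  shows "fold f w ` X \<subseteq> X"
  using assms by (induction w) (auto simp: image_subset_iff)

lemma fold_image_eq:
  assumes "\<And>i. i \<in> set w \<Longrightarrow> f i ` X = X"
  shows "fold f w ` X = X"
  using assms
proof (induction w)
  case (Cons i w)
  have "fold f (i # w) ` X = fold f w ` f i ` X" by (simp add: image_image)
  then show ?case using Cons by simp
qed simp

lemma continuous_on_fold:
  assumes "\<And>i. i \<in> set w \<Longrightarrow> continuous_on X (f i) \<and> f i ` X \<subseteq> X"
  shows "continuous_on X (fold f w)"
  using assms
proof (induction w)
  case (Cons i w)
  then show ?case by (auto intro: continuous_on_compose2)
qed simp

lemma hausdist_less_imp_near: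
  fixes A B :: "'a::metric_space set"
  assumes "bounded B" "A \<noteq> {}" "z \<in> B" "hausdist A B < r"
  shows "\<exists>a\<in>A. dist a z < r"
proof -
  obtain a0 where a0: "a0 \<in> A" using assms(2) by blast
  obtain e where e: "\<And>b. b \<in> B \<Longrightarrow> dist a0 b \<le> e"
    using assms(1) bounded_any_center by blast
  have "bdd_above ((\<lambda>b. infdist b A) ` B)"
    by (rule bdd_aboveI2[where M=e]) (metis a0 e infdist_le2 dist_commute)
  then have "infdist z A \<le> (SUP b\<in>B. infdist b A)" using assms(3) by (rule cSUP_upper2) simp
  also have "\<dots> \<le> hausdist A B" by (simp add: hausdist_def)
  finally have "(INF a\<in>A. dist z a) < r" using assms(2,4) by (simp add: infdist_notempty)
  moreover have "bdd_below ((\<lambda>a. dist z a) ` A)" by (rule bdd_belowI2[where m=0]) simp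
  ultimately show ?thesis
    using assms(2) by (auto simp: cINF_less_iff dist_commute)
qed

lemma eventually_word_near:
  fixes X :: "'a::metric_space set"
  assumes "bounded X" "k \<ge> 1" "z \<in> X" "r > 0"
    and "(\<lambda>n. hausdist ((hutchinson k f ^^ n) {a}) X) \<longlonglongrightarrow> 0"
  shows "\<forall>\<^sub>F n in sequentially. \<exists>w\<in>words k n. dist (fold f w a) z < r"
  using order_tendstoD(2)[OF assms(5,4)]
proof (rule eventually_mono)
  fix n assume "hausdist ((hutchinson k f ^^ n) {a}) X < r"
  moreover have "(hutchinson k f ^^ n) {a} = (\<lambda>w. fold f w a) ` words k n"
    by (auto simp: hutchinson_funpow)
  moreover have "words k n \<noteq> {}" using replicate_in_words assms(2) by blast
  ultimately obtain y where "y \<in> (\<lambda>w. fold f w a) ` words k n" "dist y z < r"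
    using hausdist_less_imp_near[OF assms(1) _ assms(3)] by (metis image_is_empty)
  then show "\<exists>w\<in>words k n. dist (fold f w a) z < r" by blast
qed

lemma compact_Baire_ball:
  fixes X :: "'a::metric_space set" and A :: "nat \<Rightarrow> 'a set"
  assumes "compact X" "X \<noteq> {}" "\<And>M. closed (A M)" "X \<subseteq> (\<Union>M. A M)"
  shows "\<exists>M c \<rho>. c \<in> X \<and> \<rho> > 0 \<and> X \<inter> ball c \<rho> \<subseteq> A M"
proof -
  let ?T = "top_of_set X"
  have "\<exists>M. ?T interior_of (X \<inter> A M) \<noteq> {}"
  proof (rule ccontr)
    assume "\<nexists>M. ?T interior_of (X \<inter> A M) \<noteq> {}"
    then have "?T interior_of (\<Union>M. X \<inter> A M) = {}"
      using assms(1,3)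
      by (intro Baire_category_alt)
         (auto intro!: compact_imp_locally_compact_space compact_space_subtopology
            regular_space_subtopology regular_space_euclidean closedin_closed_Int)
    moreover have "(\<Union>M. X \<inter> A M) = X" using assms(4) by blast
    ultimately show False
      using assms(2) by (metis interior_of_topspace topspace_euclidean_subtopology)
  qed
  then obtain M c where c: "c \<in> ?T interior_of (X \<inter> A M)" by blast
  moreover have "openin ?T (?T interior_of (X \<inter> A M))" by simp
  ultimately obtain \<rho> where "\<rho> > 0" "ball c \<rho> \<inter> X \<subseteq> ?T interior_of (X \<inter> A M)"
    unfolding openin_contains_ball by blast
  moreover have "c \<in> X" using c interior_of_subset_topspace by fastforce
  ultimately show ?thesis using interior_of_subset[of ?T "X \<inter> A M"] by blast
qed

lemma uniform_length_by_padding: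
  fixes X :: "'a::metric_space set"
  assumes "compact X"
    and reach: "\<And>a. a \<in> X \<Longrightarrow> \<exists>w\<in>lists {1..k}. \<exists>R>0. \<forall>a'\<in>X. dist a' a < R \<longrightarrow> fold f w a' \<in> G"
    and good: "\<And>a n. a \<in> G \<Longrightarrow> n \<ge> M \<Longrightarrow> \<exists>w\<in>words k n. Q (fold f w a)"
  shows "\<exists>N. \<forall>a\<in>X. \<exists>w\<in>words k N. Q (fold f w a)"
proof -
  obtain W R where WR: "\<And>a. a \<in> X \<Longrightarrow>
      W a \<in> lists {1..k} \<and> R a > 0 \<and> (\<forall>a'\<in>X. dist a' a < R a \<longrightarrow> fold f (W a) a' \<in> G)"
    using reach by metis
  obtain K where K: "K \<subseteq> X" "finite K" "X \<subseteq> (\<Union>a\<in>K. ball a (R a))"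
  proof (rule compactE_image[OF assms(1), of X "\<lambda>a. ball a (R a)"])
    show "X \<subseteq> (\<Union>a\<in>X. ball a (R a))" using WR by force
  qed auto
  define N where "N = (\<Sum>a\<in>K. length (W a)) + M"
  have "\<exists>w\<in>words k N. Q (fold f w a')" if a': "a' \<in> X" for a'
  proof -
    obtain a where a: "a \<in> K" "dist a' a < R a" using K a' by (auto simp: dist_commute)
    have "length (W a) \<le> (\<Sum>a\<in>K. length (W a))"
      by (rule member_le_sum[OF a(1)]) (simp_all add: K(2))
    then have len: "length (W a) \<le> N" "M \<le> N - length (W a)" by (simp_all add: N_def)
    have "fold f (W a) a' \<in> G" using WR a K(1) a' by blast
    then obtain w where w: "w \<in> words k (N - length (W a))" "Q (fold f w (fold f (W a) a'))"
      using good len(2) by blast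
    have "W a @ w \<in> words k N" using w(1) WR a K(1) len by (auto simp: words_def)
    then show ?thesis using w(2) by (auto intro!: bexI)
  qed
  then show ?thesis by blast
qed

lemma uniform_word_length:
  fixes X :: "'a::metric_space set"
  assumes "compact X" "k \<ge> 1"
    and f: "\<And>i. i \<in> {1..k} \<Longrightarrow> continuous_on X (f i) \<and> f i ` X \<subseteq> X"
    and conv: "\<And>a. a \<in> X \<Longrightarrow> (\<lambda>n. hausdist ((hutchinson k f ^^ n) {a}) X) \<longlonglongrightarrow> 0"
    and "b \<in> X" "\<delta> > 0"
  shows "\<exists>N. \<forall>a\<in>X. \<exists>w\<in>words k N. dist (fold f w a) b < \<delta>"
proof -
  have bX: "bounded X" using assms(1) by (rule compact_imp_bounded)
  have cont: "continuous_on X (fold f w)" if "w \<in> lists {1..k}" for w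
    using that by (intro continuous_on_fold f) auto
  define A where "A M = (\<Inter>n\<in>{M..}. \<Union>w\<in>words k n. X \<inter> fold f w -` cball b (\<delta>/2))" for M
  have "closed (X \<inter> fold f w -` cball b (\<delta>/2))" if "w \<in> words k n" for w n
    using cont that compact_imp_closed[OF assms(1)]
    by (intro continuous_closed_preimage) (auto simp: words_def)
  then have "closed (A M)" for M
    unfolding A_def using finite_words by (intro closed_INT closed_UN ballI) auto
  moreover have "X \<subseteq> (\<Union>M. A M)"
  proof
    fix a assume a: "a \<in> X"
    obtain P where "\<forall>n\<ge>P. \<exists>w\<in>words k n. dist (fold f w a) b < \<delta>/2"
      using eventually_word_near[OF bX assms(2,5) _ conv[OF a], of "\<delta>/2"] assms(6)
      unfolding eventually_sequentially by (meson half_gt_zero)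
    then have "a \<in> A P"
      using a unfolding A_def by (fastforce simp: dist_commute)
    then show "a \<in> (\<Union>M. A M)" by blast
  qed
  ultimately obtain M c \<rho> where c: "c \<in> X" "\<rho> > 0" "X \<inter> ball c \<rho> \<subseteq> A M"
    using compact_Baire_ball[of X A] assms(1,5) by blast
  show ?thesis
  proof (rule uniform_length_by_padding[OF assms(1)])
    fix a assume a: "a \<in> X"
    obtain n w where w: "w \<in> words k n" "dist (fold f w a) c < \<rho>"
      using eventually_happens'[OF sequentially_bot eventually_word_near[OF bX assms(2) c(1,2) conv[OF a]]]
      by blast
    then have wX: "fold f w ` X \<subseteq> X"
      using f by (intro fold_image_subset) (force simp: words_def)
    have "continuous_on X (fold f w)" using cont w(1) by (simp add: words_def)
    moreover have "\<rho> - dist (fold f w a) c > 0" using w(2) by simp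
    ultimately obtain R where R: "R > 0"
      "\<forall>a'\<in>X. dist a' a < R \<longrightarrow> dist (fold f w a') (fold f w a) < \<rho> - dist (fold f w a) c"
      using a unfolding continuous_on_iff by blast
    have "fold f w a' \<in> X \<inter> ball c \<rho>" if "a' \<in> X" "dist a' a < R" for a'
    proof -
      have "dist (fold f w a') (fold f w a) < \<rho> - dist (fold f w a) c" using R(2) that by blast
      then have "dist (fold f w a') c < \<rho>"
        using dist_triangle[of "fold f w a'" c "fold f w a"] by linarith
      then show ?thesis using that(1) wX by (auto simp: dist_commute)
    qed
    then show "\<exists>w\<in>lists {1..k}. \<exists>R>0. \<forall>a'\<in>X. dist a' a < R \<longrightarrow> fold f w a' \<in> X \<inter> ball c \<rho>"
      using w(1) R(1) by (auto simp: words_def)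
  next
    fix a n assume "a \<in> X \<inter> ball c \<rho>" "M \<le> n"
    then have "a \<in> A M" using c(3) by blast
    then obtain w where w: "w \<in> words k n" "dist b (fold f w a) \<le> \<delta>/2"
      using \<open>M \<le> n\<close> unfolding A_def by auto
    have "dist (fold f w a) b < \<delta>" using w(2) assms(6) by (simp add: dist_commute)
    then show "\<exists>w\<in>words k n. dist (fold f w a) b < \<delta>" using w(1) by blast
  qed
qed

lemma skew_funpow:
  "(skew f ^^ n) (\<zeta>, a) = (\<lambda>i. \<zeta> (i + int n), fold f (map (\<lambda>j. \<zeta> (int j)) [0..<n]) a)"
proof (induction n)
  case (Suc n)
  then show ?case
    by (simp add: skew_def shift_def add.assoc)
qed simp

text \<open>The letters \<open>\<omega>\<^sub>-\<^sub>n, \<dots>, \<omega>\<^sub>-\<^sub>1\<close>, i.e.\ the fibre maps that \<open>\<Phi>\<^sup>n\<close> applies on its way to the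
  fibre over \<open>\<omega>\<close>.\<close>

definition past_word :: "(int \<Rightarrow> nat) \<Rightarrow> nat \<Rightarrow> nat list" where
  "past_word \<omega> n = map (\<lambda>j. \<omega> (int j - int n)) [0..<n]"

lemma past_word_in_words: "\<omega> \<in> Sigma_k k \<Longrightarrow> past_word \<omega> n \<in> words k n"
  by (auto simp: past_word_def words_def Sigma_k_def)

lemma Wuu_memI:
  assumes "\<omega> \<in> Sigma_k k" "\<eta> \<in> Sigma_k k" "\<And>i. i < - int n \<Longrightarrow> \<eta> i = \<omega> i"
    and "x0 \<in> X" "fold f (past_word \<omega> n) x0 = x"
  shows "(\<eta>, fold f (past_word \<eta> n) x0) \<in> Wuu k X f (\<omega>, x)"
proof -
  define \<zeta> where "\<zeta> i = \<omega> (i - int n)" for i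
  define \<zeta>' where "\<zeta>' i = \<eta> (i - int n)" for i
  have "(skew f ^^ n) (\<zeta>, x0) = (\<omega>, x)"
    using assms(5) by (simp add: skew_funpow \<zeta>_def past_word_def)
  moreover have "(\<zeta>, x0) \<in> Sigma_k k \<times> X" using assms(1,4) by (simp add: \<zeta>_def Sigma_k_def)
  ultimately have "(\<zeta>, x0) \<in> {z \<in> Sigma_k k \<times> X. (skew f ^^ n) z = (\<omega>, x)}" by simp
  moreover have "(\<zeta>', x0) \<in> Wuu_loc k (\<zeta>, x0)"
    using assms(2,3) by (simp add: Wuu_loc_def Sigma_k_def \<zeta>_def \<zeta>'_def)
  moreover have "(skew f ^^ n) (\<zeta>', x0) = (\<eta>, fold f (past_word \<eta> n) x0)"
    by (simp add: skew_funpow \<zeta>'_def past_word_def)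
  ultimately show ?thesis unfolding Wuu_def by (intro UN_I[of n] UN_I[of "(\<zeta>, x0)"] rev_image_eqI) auto
qed

lemma splice_past:
  assumes "\<omega> \<in> Sigma_k k" "\<omega>' \<in> Sigma_k k" "u \<in> words k N"
  obtains \<eta> where "\<eta> \<in> Sigma_k k" "\<And>i. i < - int (N + m) \<Longrightarrow> \<eta> i = \<omega> i"
    "\<And>i. - int m \<le> i \<Longrightarrow> \<eta> i = \<omega>' i" "past_word \<eta> (N + m) = u @ past_word \<omega>' m"
proof -
  define \<eta> where "\<eta> i = (if i < - int (N + m) then \<omega> i
      else if i < - int m then u ! nat (i + int (N + m)) else \<omega>' i)" for i
  have u: "length u = N" "set u \<subseteq> {1..k}" using assms(3) by (auto simp: words_def)
  show ?thesis
  proof (rule that)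
    show "\<eta> \<in> Sigma_k k"
      using assms(1,2) u nth_mem[of _ u] by (auto simp: Sigma_k_def \<eta>_def subset_iff)
    show "past_word \<eta> (N + m) = u @ past_word \<omega>' m"
      using u(1) by (intro nth_equalityI) (auto simp: past_word_def \<eta>_def nth_append diff_diff_eq)
  qed (simp_all add: \<eta>_def)
qed

lemma dSigma_le_power:
  assumes "0 \<le> \<nu>" "\<nu> \<le> 1" "\<And>i. \<bar>i\<bar> < int m \<Longrightarrow> \<eta> i = \<omega> i"
  shows "dSigma \<nu> \<eta> \<omega> \<le> \<nu> ^ m"
proof (cases "\<eta> = \<omega>")
  case False
  define P where "P = (\<lambda>l. \<eta> (int l) \<noteq> \<omega> (int l) \<or> \<eta> (- int l) \<noteq> \<omega> (- int l))"
  obtain i where "\<eta> i \<noteq> \<omega> i" using False by blast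
  then have "P (nat \<bar>i\<bar>)" by (cases "i \<ge> 0") (auto simp: P_def)
  then have "P (Least P)" by (rule LeastI)
  have "m \<le> Least P"
  proof (rule ccontr)
    assume "\<not> m \<le> Least P"
    then show False using \<open>P (Least P)\<close> assms(3)[of "int (Least P)"] assms(3)[of "- int (Least P)"]
      by (auto simp: P_def)
  qed
  then have "\<nu> ^ Least P \<le> \<nu> ^ m" using assms(1,2) by (rule power_decreasing)
  then show ?thesis using False by (simp add: dSigma_def P_def)
qed (simp add: dSigma_def assms(1))

lemma continuous_onto_near_preimage:
  assumes "continuous_on X g" "g ` X = X" "y \<in> X" "\<epsilon> > 0"
  obtains b \<delta> where "b \<in> X" "\<delta> > 0" "\<And>a. a \<in> X \<Longrightarrow> dist a b < \<delta> \<Longrightarrow> dist (g a) y < \<epsilon>"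
proof -
  obtain b where b: "b \<in> X" "g b = y" using assms(2,3) by (metis imageE)
  then obtain \<delta> where "\<delta> > 0" "\<forall>a\<in>X. dist a b < \<delta> \<longrightarrow> dist (g a) y < \<epsilon>"
    using assms(1,4) unfolding continuous_on_iff by blast
  with b(1) show ?thesis using that by blast
qed

lemma strict_attractor_space_orbit:
  assumes "strict_attractor X k f X" "a \<in> X"
  shows "(\<lambda>n. hausdist ((hutchinson k f ^^ n) {a}) X) \<longlonglongrightarrow> 0"
proof -
  obtain U where "X \<subseteq> U" and conv: "\<And>S. S \<noteq> {} \<and> compact S \<and> S \<subseteq> U \<Longrightarrow>
      (\<lambda>n. hausdist ((hutchinson k f ^^ n) S) X) \<longlonglongrightarrow> 0"
    using assms(1) unfolding strict_attractor_def by blast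
  then show ?thesis using assms(2) by (intro conv) auto
qed

lemma leaf_meets_cylinder:
  assumes \<omega>: "\<omega> \<in> Sigma_k k" and "x \<in> X" and \<omega>': "\<omega>' \<in> Sigma_k k"
    and onto: "\<And>i. i \<in> {1..k} \<Longrightarrow> f i ` X = X"
    and N: "\<forall>a\<in>X. \<exists>w\<in>words k N. dist (fold f w a) b < \<delta>"
  obtains \<eta> a where "(\<eta>, fold f (past_word \<omega>' m) a) \<in> Wuu k X f (\<omega>, x)"
    "\<And>i. - int m \<le> i \<Longrightarrow> \<eta> i = \<omega>' i" "a \<in> X" "dist a b < \<delta>"
proof -
  have fold_onto: "fold f w ` X = X" if "w \<in> words k n" for w n
    using that onto by (intro fold_image_eq) (force simp: words_def)
  have "x \<in> fold f (past_word \<omega> (N + m)) ` X"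
    using fold_onto[OF past_word_in_words[OF \<omega>]] \<open>x \<in> X\<close> by simp
  then obtain x0 where x0: "x0 \<in> X" "fold f (past_word \<omega> (N + m)) x0 = x" by blast
  obtain u where u: "u \<in> words k N" "dist (fold f u x0) b < \<delta>" using N x0(1) by blast
  obtain \<eta> where \<eta>: "\<eta> \<in> Sigma_k k" "\<And>i. i < - int (N + m) \<Longrightarrow> \<eta> i = \<omega> i"
    "\<And>i. - int m \<le> i \<Longrightarrow> \<eta> i = \<omega>' i" "past_word \<eta> (N + m) = u @ past_word \<omega>' m"
    using splice_past[OF \<omega> \<omega>' u(1), where m = m] by blast
  have "(\<eta>, fold f (past_word \<omega>' m) (fold f u x0)) \<in> Wuu k X f (\<omega>, x)"
    using Wuu_memI[OF \<omega> \<eta>(1,2) x0] \<eta>(4) by simp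
  moreover have "fold f u x0 \<in> X" using fold_onto[OF u(1)] x0(1) by blast
  ultimately show ?thesis using \<eta>(3) u(2) that by blast
qed

theorem theoremA:
  fixes X :: "'a::metric_space set" and k :: nat and f :: "nat \<Rightarrow> 'a \<Rightarrow> 'a" and \<nu> :: real
  assumes "compact X"
    and "k \<ge> 1"
    and "0 < \<nu>" and "\<nu> < 1"
    and "\<forall>i\<in>{1..k}. \<exists>g. homeomorphism X X (f i) g"
    and "strict_attractor X k f X"
  shows "\<forall>\<omega>\<in>Sigma_k k. \<forall>x\<in>X. dense_in_SX \<nu> k X (Wuu k X f (\<omega>, x))"
  unfolding dense_in_SX_def
proof (intro ballI allI impI)
  fix \<omega> x \<omega>' y and \<epsilon> :: real
  assume \<omega>: "\<omega> \<in> Sigma_k k" and x: "x \<in> X" and \<omega>': "\<omega>' \<in> Sigma_k k" and y: "y \<in> X"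
    and "\<epsilon> > 0"
  have fX: "continuous_on X (f i) \<and> f i ` X \<subseteq> X" and onto: "f i ` X = X"
    if "i \<in> {1..k}" for i
    using assms(5) that unfolding homeomorphism_def by blast+
  obtain m where m: "\<nu> ^ m < \<epsilon>" using real_arch_pow_inv[OF \<open>\<epsilon> > 0\<close> assms(4)] by blast
  have v: "past_word \<omega>' m \<in> words k m" using \<omega>' by (rule past_word_in_words)
  have "continuous_on X (fold f (past_word \<omega>' m))"
    using v fX by (intro continuous_on_fold) (force simp: words_def)
  moreover have "fold f (past_word \<omega>' m) ` X = X"
    using v onto by (intro fold_image_eq) (force simp: words_def)
  ultimately obtain b \<delta> where b: "b \<in> X" and \<delta>: "\<delta> > 0"
    "\<And>a. a \<in> X \<Longrightarrow> dist a b < \<delta> \<Longrightarrow> dist (fold f (past_word \<omega>' m) a) y < \<epsilon>"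
    using continuous_onto_near_preimage y \<open>\<epsilon> > 0\<close> by metis
  obtain N where N: "\<forall>a\<in>X. \<exists>w\<in>words k N. dist (fold f w a) b < \<delta>"
    using uniform_word_length[OF assms(1,2) fX strict_attractor_space_orbit[OF assms(6)] b \<delta>(1)]
    by blast
  obtain \<eta> a where "(\<eta>, fold f (past_word \<omega>' m) a) \<in> Wuu k X f (\<omega>, x)"
    "\<And>i. - int m \<le> i \<Longrightarrow> \<eta> i = \<omega>' i" "a \<in> X" "dist a b < \<delta>"
    using leaf_meets_cylinder[OF \<omega> x \<omega>' onto N] by blast
  moreover have "dSigma \<nu> \<eta> \<omega>' < \<epsilon>"
    using dSigma_le_power[of \<nu> m \<eta> \<omega>'] calculation(2) assms(3,4) m by fastforce
  moreover have "dist (fold f (past_word \<omega>' m) a) y < \<epsilon>" using \<delta>(2) calculation(3,4) .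
  ultimately show "\<exists>(\<eta>, y')\<in>Wuu k X f (\<omega>, x). dSigma \<nu> \<eta> \<omega>' < \<epsilon> \<and> dist y' y < \<epsilon>"
    by blast
qed

end
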